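(* Let $p\in(0,1)$ and let $(\lambda_n)_{n\ge1}$ be a sequence with $\lambda_1=1$ and $0<\lambda_n\le\lambda_{n-1}$ for all $n>1$. Let $r_1,r_2,\dots$ be $\{0,1\}$-valued random variables with $\Pr(r_1=1)=p$ and, for every $n\ge2$, $\Pr(r_n=1\mid r_1,\dots,r_{n-1})=\lambda_n p+(1-\lambda_n)\bar p_{n-1}$, where $\bar p_m=\frac1m\sum_{i=1}^m r_i$. Define $\hat r_1=r_1$, $\hat r_i=\frac{r_i-(1-\lambda_i)\bar p_{i-1}}{\lambda_i}$ for $i\ge2$, and for weights $\omega_1,\dots,\omega_n>0$ let $\hat p_n=\frac{\sum_{i=1}^n\omega_i\hat r_i}{\sum_{i=1}^n\omega_i}$. Let $\epsilon>0$ and $\alpha\in(0,1)$. If \[\Big(\sum_{i=1}^n\omega_i\Big)^2\ge\frac{1}{2\epsilon^2}\log\frac{2}{\alpha}\sum_{i=1}^n\Big(\frac{\omega_i}{\lambda_i}\Big)^2,\] then $\Pr(|\hat p_n-p|\le\epsilon)\ge1-\alpha$.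
   Context: $\log$ denotes the natural logarithm. *)

theory Defs
  imports "HOL-Probability.Probability"
begin

definition pbar :: "(nat \<Rightarrow> 'a \<Rightarrow> real) \<Rightarrow> nat \<Rightarrow> 'a \<Rightarrow> real" where
  "pbar r m x = (\<Sum>i=1..m. r i x) / real m"

definition rhat :: "(nat \<Rightarrow> real) \<Rightarrow> (nat \<Rightarrow> 'a \<Rightarrow> real) \<Rightarrow> nat \<Rightarrow> 'a \<Rightarrow> real" where
  "rhat lam r i x = (if i = 1 then r 1 x
                     else (r i x - (1 - lam i) * pbar r (i - 1) x) / lam i)"

definition phat :: "(nat \<Rightarrow> real) \<Rightarrow> (nat \<Rightarrow> real) \<Rightarrow> (nat \<Rightarrow> 'a \<Rightarrow> real) \<Rightarrow> nat \<Rightarrow> 'a \<Rightarrow> real" where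
  "phat lam w r n x = (\<Sum>i=1..n. w i * rhat lam r i x) / (\<Sum>i=1..n. w i)"

end

theory Submission
  imports Defs
begin

(*
  Given r_1, ..., r_(k-1), the variable r_k is Bernoulli with parameter
  q_k = lam_k p + (1 - lam_k) pbar_(k-1), and w_k (rhat_k - p) = (w_k / lam_k) (r_k - q_k).
  So the partial sums S_k of w_i (rhat_i - p) form a martingale whose k-th increment is
  centred and ranges over an interval of length w_k / lam_k. Hoeffding's lemma bounds each
  conditional moment generating function by exp (s^2 (w_k / lam_k)^2 / 8); peeling off the
  last step (as for Azuma's inequality) gives E exp (s S_n) <= exp (s^2 V / 8) with
  V = sum (w_i / lam_i)^2. The Chernoff bound with s = 4 t / V yields
  P (|S_n| > t) <= 2 exp (-2 t^2 / V), and for t = eps * sum w_i the hypothesis makes this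
  at most alpha. As the r_i are 0/1-valued, all expectations are finite sums over binary
  words weighted by cylinder probabilities.
*)

lemma pbar_cong:
  assumes "\<forall>j\<in>{1..m}. r j x = r' j y"
  shows "pbar r m x = pbar r' m y"
  unfolding pbar_def using assms by (auto intro!: sum.cong arg_cong2[where f="(/)"])

lemma rhat_cong:
  assumes "1 \<le> i" "\<forall>j\<in>{1..i}. r j x = r' j y"
  shows "rhat lam r i x = rhat lam r' i y"
proof -
  have "pbar r (i - 1) x = pbar r' (i - 1) y"
    using assms by (intro pbar_cong) auto
  then show ?thesis using assms unfolding rhat_def by auto
qed

lemma pbar_bounds:
  assumes "\<And>i. i \<in> {1..m} \<Longrightarrow> r i x \<in> {0..1}"
  shows "0 \<le> pbar r m x" "pbar r m x \<le> 1"
proof -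
  have "(\<Sum>i=1..m. r i x) \<le> of_nat (card {1..m}) * 1"
    using assms by (intro sum_bounded_above) auto
  moreover have "0 \<le> (\<Sum>i=1..m. r i x)"
    using assms by (intro sum_nonneg) auto
  ultimately show "0 \<le> pbar r m x" "pbar r m x \<le> 1"
    unfolding pbar_def by (auto simp: divide_le_eq)
qed

definition deviation ::
    "(nat \<Rightarrow> real) \<Rightarrow> (nat \<Rightarrow> real) \<Rightarrow> real \<Rightarrow> (nat \<Rightarrow> 'a \<Rightarrow> real) \<Rightarrow> nat \<Rightarrow> 'a \<Rightarrow> real" where
  "deviation lam w p r k x = (\<Sum>i=1..k. w i * (rhat lam r i x - p))"

lemma phat_minus_eq_deviation:
  assumes "(\<Sum>i=1..n. w i) \<noteq> 0"
  shows "phat lam w r n x - p = deviation lam w p r n x / (\<Sum>i=1..n. w i)"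
  using assms unfolding phat_def deviation_def
  by (simp add: field_simps sum_subtractf sum_distrib_left sum_distrib_right)

lemma deviation_cong:
  assumes "\<forall>j\<in>{1..n}. r j x = r' j y"
  shows "deviation lam w p r n x = deviation lam w p r' n y"
  unfolding deviation_def using assms by (auto intro!: sum.cong rhat_cong)

text \<open>A word b is read as the only sample path of a one-point space, so that
  pbar, rhat and deviation can be evaluated on it.\<close>
abbreviation sample_path :: "(nat \<Rightarrow> real) \<Rightarrow> nat \<Rightarrow> unit \<Rightarrow> real" where
  "sample_path b \<equiv> \<lambda>i _. b i"

lemma deviation_sample_path_Suc:
  assumes "lam 1 = 1"
  shows "deviation lam w p (sample_path (b(Suc k := a))) (Suc k) () =
    deviation lam w p (sample_path b) k () +
    w (Suc k) * ((a - (1 - lam (Suc k)) * pbar (sample_path b) k ()) / lam (Suc k) - p)"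
proof -
  have prefix: "deviation lam w p (sample_path (b(Suc k := a))) k () =
      deviation lam w p (sample_path b) k ()"
    by (intro deviation_cong) auto
  have last: "rhat lam (sample_path (b(Suc k := a))) (Suc k) () =
      (a - (1 - lam (Suc k)) * pbar (sample_path b) k ()) / lam (Suc k)"
  proof (cases "k = 0")
    case True
    then show ?thesis using assms by (simp add: rhat_def)
  next
    case False
    have "pbar (sample_path (b(Suc k := a))) k () = pbar (sample_path b) k ()"
      by (intro pbar_cong) auto
    then show ?thesis using False by (simp add: rhat_def)
  qed
  show ?thesis
    using prefix last by (simp add: deviation_def)
qed

definition binary_words :: "nat \<Rightarrow> (nat \<Rightarrow> real) set" where
  "binary_words k = {b. (\<forall>i\<in>{1..k}. b i \<in> {0, 1}) \<and> (\<forall>i. i \<notin> {1..k} \<longrightarrow> b i = 0)}"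

lemma binary_words_0: "binary_words 0 = {\<lambda>_. 0}"
  unfolding binary_words_def by auto

lemma binary_words_Suc:
  "binary_words (Suc k) = (\<lambda>(b, a). b(Suc k := a)) ` (binary_words k \<times> {0, 1})"
proof
  show "(\<lambda>(b, a). b(Suc k := a)) ` (binary_words k \<times> {0, 1}) \<subseteq> binary_words (Suc k)"
    unfolding binary_words_def by (fastforce simp: le_Suc_eq)
next
  show "binary_words (Suc k) \<subseteq> (\<lambda>(b, a). b(Suc k := a)) ` (binary_words k \<times> {0, 1})"
  proof
    fix b assume b: "b \<in> binary_words (Suc k)"
    have "b(Suc k := 0) \<in> binary_words k" "b (Suc k) \<in> {0, 1}"
      using b unfolding binary_words_def by (auto simp: le_Suc_eq)
    then show "b \<in> (\<lambda>(b, a). b(Suc k := a)) ` (binary_words k \<times> {0, 1})"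
      by (intro image_eqI[where x="(b(Suc k := 0), b (Suc k))"]) auto
  qed
qed

lemma inj_on_extend_binary_word:
  "inj_on (\<lambda>(b, a). b(Suc k := a)) (binary_words k \<times> A)"
proof (rule inj_onI, clarify)
  fix b a b' a'
  assume b: "b \<in> binary_words k" "b' \<in> binary_words k"
    and eq: "b(Suc k := a) = b'(Suc k := a')"
  have "b i = b' i" for i
    using fun_cong[OF eq, of i] b unfolding binary_words_def
    by (cases "i = Suc k") auto
  then show "b = b' \<and> a = a'"
    using fun_cong[OF eq, of "Suc k"] by auto
qed

lemma finite_binary_words: "finite (binary_words k)"
  by (induction k) (auto simp: binary_words_0 binary_words_Suc)

lemma sum_binary_words_Suc:
  "(\<Sum>b\<in>binary_words (Suc k). f b) =
    (\<Sum>b\<in>binary_words k. f (b(Suc k := 0)) + f (b(Suc k := 1)))"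
proof -
  have "(\<Sum>b\<in>binary_words (Suc k). f b) =
      (\<Sum>(b, a)\<in>binary_words k \<times> {0, 1}. f (b(Suc k := a)))"
    unfolding binary_words_Suc
    by (subst sum.reindex[OF inj_on_extend_binary_word]) (simp add: case_prod_unfold)
  also have "\<dots> = (\<Sum>b\<in>binary_words k. f (b(Suc k := 0)) + f (b(Suc k := 1)))"
    by (subst sum.cartesian_product[symmetric]) simp
  finally show ?thesis .
qed

lemma Hoeffdings_lemma_two_point_nonneg:
  fixes q h :: real
  assumes "0 \<le> q" "q \<le> 1" "0 \<le> h"
  shows "q * exp (h * (1 - q)) + (1 - q) * exp (- h * q) \<le> exp (h\<^sup>2 / 8)"
proof -
  have pos: "0 < 1 + q * (exp h - 1)"
    using assms by (intro add_pos_nonneg mult_nonneg_nonneg) auto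
  have "exp (- h * q + ln (1 + q * (exp h - 1))) \<le> exp (h\<^sup>2 / 8)"
    using Hoeffdings_lemma_aux[of h q] assms by simp
  also have "exp (- h * q + ln (1 + q * (exp h - 1))) = exp (- h * q) * (1 + q * (exp h - 1))"
    using pos by (simp only: exp_add exp_ln mult.commute)
  also have "\<dots> = q * exp (h * (1 - q)) + (1 - q) * exp (- h * q)"
    by (simp add: algebra_simps flip: exp_add)
  finally show ?thesis .
qed

lemma Hoeffdings_lemma_two_point:
  fixes q s c :: real
  assumes "0 \<le> q" "q \<le> 1"
  shows "q * exp (s * ((1 - q) * c)) + (1 - q) * exp (s * (- q * c)) \<le> exp (s\<^sup>2 * c\<^sup>2 / 8)"
proof (cases "0 \<le> s * c")
  case True
  then show ?thesis
    using Hoeffdings_lemma_two_point_nonneg[OF assms True]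
    by (simp add: algebra_simps power_mult_distrib)
next
  case False
  have "(1 - q) * exp (- (s * c) * (1 - (1 - q))) + (1 - (1 - q)) * exp (- (- (s * c)) * (1 - q))
      \<le> exp ((- (s * c))\<^sup>2 / 8)"
    using False assms by (intro Hoeffdings_lemma_two_point_nonneg) auto
  then show ?thesis
    by (simp add: algebra_simps power_mult_distrib)
qed

lemma sum_power2_pos:
  fixes f :: "nat \<Rightarrow> real"
  assumes "1 \<le> n" "f 1 \<noteq> 0"
  shows "0 < (\<Sum>i=1..n. (f i)\<^sup>2)"
proof -
  have "0 < (f 1)\<^sup>2"
    using assms(2) by simp
  also have "\<dots> \<le> (\<Sum>i=1..n. (f i)\<^sup>2)"
    using assms(1) by (intro member_le_sum) auto
  finally show ?thesis .
qed

lemma Chernoff_two_sided_finite: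
  fixes P S :: "'b \<Rightarrow> real"
  assumes "finite B" and P: "\<And>b. b \<in> B \<Longrightarrow> 0 \<le> P b" "sum P B = 1" and "0 < s"
    and mgf: "(\<Sum>b\<in>B. P b * exp (s * S b)) \<le> E" "(\<Sum>b\<in>B. P b * exp (- s * S b)) \<le> E"
  shows "1 - 2 * exp (- s * t) * E \<le> (\<Sum>b\<in>{b\<in>B. \<bar>S b\<bar> \<le> t}. P b)"
proof -
  have pointwise: "P b \<le> (if \<bar>S b\<bar> \<le> t then P b else 0) +
      exp (- s * t) * (P b * exp (s * S b) + P b * exp (- s * S b))" if "b \<in> B" for b
  proof (cases "\<bar>S b\<bar> \<le> t")
    case True
    then show ?thesis using P(1)[OF that] by simp
  next
    case False
    then have "t < S b \<or> t < - S b" by linarith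
    then have "s * t < s * S b \<or> s * t < s * (- S b)"
      using \<open>0 < s\<close> mult_strict_left_mono by blast
    then have "1 \<le> exp (s * S b - s * t) \<or> 1 \<le> exp (- s * S b - s * t)"
      by auto
    then have "P b \<le> P b * exp (s * S b - s * t) + P b * exp (- s * S b - s * t)"
      using P(1)[OF that] mult_left_mono[of 1 _ "P b"]
      by (smt (verit) exp_ge_zero mult_nonneg_nonneg)
    moreover have "exp (s * S b - s * t) = exp (- s * t) * exp (s * S b)"
      "exp (- s * S b - s * t) = exp (- s * t) * exp (- s * S b)"
      by (simp_all flip: exp_add)
    ultimately show ?thesis
      using False by (simp add: distrib_left mult_ac)
  qed
  have "1 = (\<Sum>b\<in>B. P b)"
    using P(2) by simp
  also have "\<dots> \<le> (\<Sum>b\<in>B. (if \<bar>S b\<bar> \<le> t then P b else 0) +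
      exp (- s * t) * (P b * exp (s * S b) + P b * exp (- s * S b)))"
    by (rule sum_mono) (rule pointwise)
  also have "\<dots> = (\<Sum>b\<in>B. if \<bar>S b\<bar> \<le> t then P b else 0) +
      exp (- s * t) * ((\<Sum>b\<in>B. P b * exp (s * S b)) + (\<Sum>b\<in>B. P b * exp (- s * S b)))"
    by (simp add: sum.distrib flip: sum_distrib_left)
  also have "\<dots> \<le> (\<Sum>b\<in>B. if \<bar>S b\<bar> \<le> t then P b else 0) + exp (- s * t) * (2 * E)"
    using mgf by (intro add_left_mono mult_left_mono) auto
  finally show ?thesis
    using \<open>finite B\<close> by (simp add: sum.inter_filter)
qed

locale debiased_sampling = prob_space M for M :: "'a measure" +
  fixes r :: "nat \<Rightarrow> 'a \<Rightarrow> real" and lam :: "nat \<Rightarrow> real" and p :: real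
  assumes p: "0 < p" "p < 1"
    and lam1: "lam 1 = 1"
    and lam_pos: "\<And>k. k > 1 \<Longrightarrow> 0 < lam k"
    and lam_mono: "\<And>k. k > 1 \<Longrightarrow> lam k \<le> lam (k - 1)"
    and r_meas: "\<And>i. i \<ge> 1 \<Longrightarrow> r i \<in> borel_measurable M"
    and r_01: "\<And>i x. i \<ge> 1 \<Longrightarrow> x \<in> space M \<Longrightarrow> r i x \<in> {0, 1}"
    and r1: "measure M {x \<in> space M. r 1 x = 1} = p"
    and r_cond: "\<And>k b. k \<ge> 2 \<Longrightarrow> (\<forall>i\<in>{1..k-1}. b i \<in> {0::real, 1}) \<Longrightarrow>
        measure M {x \<in> space M. (\<forall>i\<in>{1..k-1}. r i x = b i) \<and> r k x = 1}
        = (lam k * p + (1 - lam k) * ((\<Sum>i=1..k-1. b i) / real (k - 1)))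
          * measure M {x \<in> space M. \<forall>i\<in>{1..k-1}. r i x = b i}"
begin

definition cylinder :: "nat \<Rightarrow> (nat \<Rightarrow> real) \<Rightarrow> 'a set" where
  "cylinder k b = {x \<in> space M. \<forall>i\<in>{1..k}. r i x = b i}"

definition word_prob :: "nat \<Rightarrow> (nat \<Rightarrow> real) \<Rightarrow> real" where
  "word_prob k b = measure M (cylinder k b)"

definition observed_word :: "nat \<Rightarrow> 'a \<Rightarrow> nat \<Rightarrow> real" where
  "observed_word k x = (\<lambda>i. if i \<in> {1..k} then r i x else 0)"

definition next_prob :: "nat \<Rightarrow> (nat \<Rightarrow> real) \<Rightarrow> real" where
  "next_prob k b = lam (Suc k) * p + (1 - lam (Suc k)) * pbar (sample_path b) k ()"

lemma lam_bounds: "1 \<le> k \<Longrightarrow> 0 < lam k \<and> lam k \<le> 1"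
proof (induction k rule: dec_induct)
  case base
  then show ?case using lam1 by simp
next
  case (step k)
  then show ?case using lam_pos[of "Suc k"] lam_mono[of "Suc k"] by simp
qed

lemma next_prob_bounds:
  assumes "b \<in> binary_words k"
  shows "0 \<le> next_prob k b \<and> next_prob k b \<le> 1"
proof -
  define l where "l = lam (Suc k)"
  define m where "m = pbar (sample_path b) k ()"
  have l: "0 < l" "l \<le> 1"
    using lam_bounds[of "Suc k"] unfolding l_def by auto
  have "sample_path b i () \<in> {0..1}" if "i \<in> {1..k}" for i
  proof -
    have "b i \<in> {0, 1}"
      using assms that unfolding binary_words_def by blast
    then show ?thesis by auto
  qed
  then have "0 \<le> m" "m \<le> 1"
    unfolding m_def by (blast intro: pbar_bounds)+
  then have "0 \<le> l * p + (1 - l) * m" "l * p + (1 - l) * m \<le> l * 1 + (1 - l) * 1"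
    using l p by (intro add_mono mult_left_mono add_nonneg_nonneg mult_nonneg_nonneg; simp)+
  then show ?thesis
    unfolding next_prob_def l_def[symmetric] m_def[symmetric] by simp
qed

lemma sets_cylinder: "cylinder k b \<in> sets M"
  unfolding cylinder_def
proof (intro sets.sets_Collect_finite_All)
  fix i assume "i \<in> {1..k}"
  then have [measurable]: "r i \<in> borel_measurable M"
    using r_meas by auto
  show "{x \<in> space M. r i x = b i} \<in> sets M"
    by measurable
qed auto

lemma word_prob_nonneg: "0 \<le> word_prob k b"
  unfolding word_prob_def by simp

lemma word_prob_0: "word_prob 0 b = 1"
  unfolding word_prob_def cylinder_def by (simp add: prob_space)

lemma word_prob_extend_1:
  assumes "b \<in> binary_words k"
  shows "word_prob (Suc k) (b(Suc k := 1)) = next_prob k b * word_prob k b"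
proof (cases "k = 0")
  case True
  have "cylinder (Suc k) (b(Suc k := 1)) = {x \<in> space M. r 1 x = 1}"
    unfolding cylinder_def True by auto
  then show ?thesis
    using True r1 lam1 word_prob_0 unfolding word_prob_def next_prob_def by simp
next
  case False
  have b: "\<forall>i\<in>{1..Suc k - 1}. b i \<in> {0, 1}"
    using assms unfolding binary_words_def by auto
  have "cylinder (Suc k) (b(Suc k := 1)) =
      {x \<in> space M. (\<forall>i\<in>{1..Suc k - 1}. r i x = b i) \<and> r (Suc k) x = 1}"
    unfolding cylinder_def by (auto simp: le_Suc_eq)
  moreover have "cylinder k b = {x \<in> space M. \<forall>i\<in>{1..Suc k - 1}. r i x = b i}"
    unfolding cylinder_def by simp
  moreover have "next_prob k b =
      lam (Suc k) * p + (1 - lam (Suc k)) * ((\<Sum>i=1..Suc k - 1. b i) / real (Suc k - 1))"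
    by (simp add: next_prob_def pbar_def)
  ultimately show ?thesis
    using r_cond[OF _ b] False unfolding word_prob_def by simp
qed

lemma word_prob_split:
  "word_prob k b = word_prob (Suc k) (b(Suc k := 0)) + word_prob (Suc k) (b(Suc k := 1))"
proof -
  have "cylinder k b = cylinder (Suc k) (b(Suc k := 0)) \<union> cylinder (Suc k) (b(Suc k := 1))"
    unfolding cylinder_def using r_01[of "Suc k"] by (auto simp: le_Suc_eq) blast+
  moreover have "cylinder (Suc k) (b(Suc k := 0)) \<inter> cylinder (Suc k) (b(Suc k := 1)) = {}"
    unfolding cylinder_def by (auto dest!: bspec[where x="Suc k"])
  ultimately show ?thesis
    unfolding word_prob_def by (simp add: finite_measure_Union sets_cylinder)
qed

lemma word_prob_extend_0:
  assumes "b \<in> binary_words k"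
  shows "word_prob (Suc k) (b(Suc k := 0)) = (1 - next_prob k b) * word_prob k b"
  using word_prob_split[of k b] word_prob_extend_1[OF assms] by (simp add: algebra_simps)

lemma measure_observed_word:
  "measure M {x \<in> space M. Q (observed_word k x)} = (\<Sum>b\<in>{b\<in>binary_words k. Q b}. word_prob k b)"
proof -
  have observed: "observed_word k x \<in> binary_words k" if "x \<in> space M" for x
    using r_01 that unfolding observed_word_def binary_words_def by auto
  have cylinder_iff: "x \<in> cylinder k b \<longleftrightarrow> x \<in> space M \<and> observed_word k x = b"
    if "b \<in> binary_words k" for x b
    using that unfolding cylinder_def observed_word_def binary_words_def by (auto simp: fun_eq_iff)
  have "{x \<in> space M. Q (observed_word k x)} = (\<Union>b\<in>{b\<in>binary_words k. Q b}. cylinder k b)"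
    using observed cylinder_iff by auto
  moreover have "measure M (\<Union>b\<in>{b\<in>binary_words k. Q b}. cylinder k b) =
      (\<Sum>b\<in>{b\<in>binary_words k. Q b}. measure M (cylinder k b))"
    by (intro finite_measure_finite_Union)
      (auto simp: finite_binary_words sets_cylinder disjoint_family_on_def cylinder_iff)
  ultimately show ?thesis
    unfolding word_prob_def by simp
qed

lemma sum_word_prob: "(\<Sum>b\<in>binary_words k. word_prob k b) = 1"
  using measure_observed_word[of "\<lambda>_. True" k] by (simp add: prob_space)

definition mgf_summand :: "(nat \<Rightarrow> real) \<Rightarrow> real \<Rightarrow> nat \<Rightarrow> (nat \<Rightarrow> real) \<Rightarrow> real" where
  "mgf_summand w s k b = word_prob k b * exp (s * deviation lam w p (sample_path b) k ())"

lemma mgf_summand_extend_le: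
  assumes b: "b \<in> binary_words k"
  shows "mgf_summand w s (Suc k) (b(Suc k := 0)) + mgf_summand w s (Suc k) (b(Suc k := 1))
    \<le> mgf_summand w s k b * exp (s\<^sup>2 * (w (Suc k) / lam (Suc k))\<^sup>2 / 8)"
proof -
  define c where "c = w (Suc k) / lam (Suc k)"
  define q where "q = next_prob k b"
  define D where "D = deviation lam w p (sample_path b) k ()"
  have "0 < lam (Suc k)"
    using lam_bounds[of "Suc k"] by simp
  \<comment> \<open>the increment is centred: given the word b, the next letter a is 1 with probability q\<close>
  then have increment:
    "w (Suc k) * ((a - (1 - lam (Suc k)) * pbar (sample_path b) k ()) / lam (Suc k) - p) = (a - q) * c"
    for a
    unfolding q_def next_prob_def c_def by (simp add: field_simps)
  have "mgf_summand w s (Suc k) (b(Suc k := 0)) + mgf_summand w s (Suc k) (b(Suc k := 1)) =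
      (1 - q) * word_prob k b * exp (s * (D + - q * c)) +
      q * word_prob k b * exp (s * (D + (1 - q) * c))"
    unfolding mgf_summand_def deviation_sample_path_Suc[of lam, OF lam1] increment
      word_prob_extend_0[OF b] word_prob_extend_1[OF b] q_def[symmetric] D_def[symmetric]
    by simp
  also have "\<dots> = mgf_summand w s k b * (q * exp (s * ((1 - q) * c)) + (1 - q) * exp (s * (- q * c)))"
    unfolding mgf_summand_def D_def[symmetric] distrib_left exp_add by (simp add: algebra_simps)
  also have "\<dots> \<le> mgf_summand w s k b * exp (s\<^sup>2 * c\<^sup>2 / 8)"
    using next_prob_bounds[OF b] unfolding q_def[symmetric]
    by (intro mult_left_mono Hoeffdings_lemma_two_point) (auto simp: mgf_summand_def word_prob_nonneg)
  finally show ?thesis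
    unfolding c_def .
qed

lemma sum_mgf_summand_le:
  "(\<Sum>b\<in>binary_words k. mgf_summand w s k b) \<le> exp (s\<^sup>2 * (\<Sum>i=1..k. (w i / lam i)\<^sup>2) / 8)"
proof (induction k)
  case 0
  then show ?case by (simp add: binary_words_0 word_prob_0 deviation_def mgf_summand_def)
next
  case (Suc k)
  define E where "E = exp (s\<^sup>2 * (w (Suc k) / lam (Suc k))\<^sup>2 / 8)"
  have "(\<Sum>b\<in>binary_words (Suc k). mgf_summand w s (Suc k) b) \<le>
      (\<Sum>b\<in>binary_words k. mgf_summand w s k b * E)"
    unfolding sum_binary_words_Suc E_def by (intro sum_mono mgf_summand_extend_le)
  also have "\<dots> \<le> exp (s\<^sup>2 * (\<Sum>i=1..k. (w i / lam i)\<^sup>2) / 8) * E"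
    using Suc.IH unfolding sum_distrib_right[symmetric] E_def by (intro mult_right_mono) auto
  also have "\<dots> = exp (s\<^sup>2 * (\<Sum>i=1..Suc k. (w i / lam i)\<^sup>2) / 8)"
    by (simp add: E_def ring_distribs add_divide_distrib flip: exp_add)
  finally show ?case .
qed

lemma prob_phat_close_ge:
  assumes "1 \<le> n" "\<And>i. 1 \<le> i \<Longrightarrow> i \<le> n \<Longrightarrow> 0 < w i" "0 < \<epsilon>"
  defines "W \<equiv> \<Sum>i=1..n. w i" and "V \<equiv> \<Sum>i=1..n. (w i / lam i)\<^sup>2"
  shows "1 - 2 * exp (- 2 * (\<epsilon> * W)\<^sup>2 / V) \<le> measure M {x \<in> space M. \<bar>phat lam w r n x - p\<bar> \<le> \<epsilon>}"
proof -
  define S where "S b = deviation lam w p (sample_path b) n ()" for b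
  define t where "t = \<epsilon> * W"
  define s where "s = 4 * t / V" \<comment> \<open>minimises - s t + s^2 V / 8\<close>
  have W: "0 < W"
    unfolding W_def using assms(1,2) by (intro sum_pos) auto
  have V: "0 < V"
    unfolding V_def using assms(1) assms(2)[of 1] lam1 by (intro sum_power2_pos) auto
  have s: "0 < s"
    unfolding s_def t_def using assms(3) W V by simp
  have close_iff: "\<bar>phat lam w r n x - p\<bar> \<le> \<epsilon> \<longleftrightarrow> \<bar>S (observed_word n x)\<bar> \<le> t" for x
  proof -
    have "deviation lam w p r n x = S (observed_word n x)"
      unfolding S_def by (intro deviation_cong) (auto simp: observed_word_def)
    then show ?thesis
      using W phat_minus_eq_deviation[where n=n and w=w and r=r and x=x]
      unfolding W_def[symmetric] t_def by (simp add: abs_divide divide_le_eq)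
  qed
  have mgf: "(\<Sum>b\<in>binary_words n. word_prob n b * exp (\<sigma> * S b)) \<le> exp (s\<^sup>2 * V / 8)"
    if "\<sigma> \<in> {s, - s}" for \<sigma>
    using sum_mgf_summand_le[of w \<sigma> n] that unfolding S_def V_def mgf_summand_def by auto
  have "1 - 2 * exp (- 2 * t\<^sup>2 / V) = 1 - 2 * exp (- s * t) * exp (s\<^sup>2 * V / 8)"
    using V unfolding s_def by (simp add: field_simps power2_eq_square flip: exp_add)
  also have "\<dots> \<le> (\<Sum>b\<in>{b\<in>binary_words n. \<bar>S b\<bar> \<le> t}. word_prob n b)"
    using mgf[of s] mgf[of "- s"] s by (intro Chernoff_two_sided_finite)
      (auto simp: finite_binary_words word_prob_nonneg sum_word_prob)
  also have "\<dots> = measure M {x \<in> space M. \<bar>phat lam w r n x - p\<bar> \<le> \<epsilon>}"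
    unfolding close_iff by (rule measure_observed_word[symmetric])
  finally show ?thesis
    unfolding t_def .
qed

end

theorem theoremA14:
  fixes M :: "'a measure" and r :: "nat \<Rightarrow> 'a \<Rightarrow> real"
    and lam w :: "nat \<Rightarrow> real" and p \<epsilon> \<alpha> :: real and n :: nat
  assumes M: "prob_space M"
    and p: "0 < p" "p < 1"
    and lam1: "lam 1 = 1"
    and lam_pos: "\<And>k. k > 1 \<Longrightarrow> 0 < lam k"
    and lam_mono: "\<And>k. k > 1 \<Longrightarrow> lam k \<le> lam (k - 1)"
    and r_meas: "\<And>i. i \<ge> 1 \<Longrightarrow> r i \<in> borel_measurable M"
    and r_01: "\<And>i x. i \<ge> 1 \<Longrightarrow> x \<in> space M \<Longrightarrow> r i x \<in> {0, 1}"
    and r1: "measure M {x \<in> space M. r 1 x = 1} = p"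
    and r_cond: "\<And>k b. k \<ge> 2 \<Longrightarrow> (\<forall>i\<in>{1..k-1}. b i \<in> {0::real, 1}) \<Longrightarrow>
        measure M {x \<in> space M. (\<forall>i\<in>{1..k-1}. r i x = b i) \<and> r k x = 1}
        = (lam k * p + (1 - lam k) * ((\<Sum>i=1..k-1. b i) / real (k - 1)))
          * measure M {x \<in> space M. \<forall>i\<in>{1..k-1}. r i x = b i}"
    and n: "n \<ge> 1"
    and w_pos: "\<And>i. 1 \<le> i \<Longrightarrow> i \<le> n \<Longrightarrow> 0 < w i"
    and eps: "0 < \<epsilon>"
    and alpha: "0 < \<alpha>" "\<alpha> < 1"
    and hyp: "(\<Sum>i=1..n. w i)\<^sup>2 \<ge>
        1 / (2 * \<epsilon>\<^sup>2) * ln (2 / \<alpha>) * (\<Sum>i=1..n. (w i / lam i)\<^sup>2)"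
  shows "measure M {x \<in> space M. \<bar>phat lam w r n x - p\<bar> \<le> \<epsilon>} \<ge> 1 - \<alpha>"
proof -
  interpret debiased_sampling M r lam p
    using M p lam1 lam_pos lam_mono r_meas r_01 r1 r_cond
    by (intro debiased_sampling.intro debiased_sampling_axioms.intro) auto
  define W where "W = (\<Sum>i=1..n. w i)"
  define V where "V = (\<Sum>i=1..n. (w i / lam i)\<^sup>2)"
  have V: "0 < V"
    unfolding V_def using n w_pos[of 1] lam1 by (intro sum_power2_pos) auto
  have "ln (2 / \<alpha>) \<le> 2 * (\<epsilon> * W)\<^sup>2 / V"
    using hyp eps V unfolding W_def[symmetric] V_def[symmetric]
    by (simp add: field_simps power_mult_distrib)
  then have "exp (- 2 * (\<epsilon> * W)\<^sup>2 / V) \<le> exp (- ln (2 / \<alpha>))"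
    by simp
  also have "\<dots> = \<alpha> / 2"
    using alpha by (simp add: exp_minus)
  finally have tail: "exp (- 2 * (\<epsilon> * W)\<^sup>2 / V) \<le> \<alpha> / 2" .
  have "1 - 2 * exp (- 2 * (\<epsilon> * W)\<^sup>2 / V) \<le>
      measure M {x \<in> space M. \<bar>phat lam w r n x - p\<bar> \<le> \<epsilon>}"
    unfolding W_def V_def using n w_pos eps by (rule prob_phat_close_ge)
  with tail show ?thesis
    by linarith
qed

end
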